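(* Let $k\ge 3$ and consider $k$ processes $P_0,\dots,P_{k-1}$ with inputs $v_0,\dots,v_{k-1}$ that are pairwise different, running the following algorithm on a single shared $\text{WRN}_{k}$ object: process $P_i$ performs $t\gets\texttt{WRN}(i,v_i)$ and then decides $t$ if $t\neq\bot$, and decides $v_i$ otherwise. Then in every execution at most $k-1$ distinct values are decided.
   Context: A $\text{WRN}_{k}$ (Write and Read Next) object is a deterministic atomic shared object with a single operation $\texttt{WRN}(i,v)$, where $i\in\{0,\dots,k-1\}$ and $v\neq\bot$. Its state consists of $k$ values $A[0],\dots,A[k-1]$, initially all $\bot$; the operation $\texttt{WRN}(i,v)$ atomically sets $A[i]\gets v$ and returns $A[(i+1)\bmod k]$. Executions are arbitrary asynchronous interleavings of the processes' atomic operations; processes may crash. *)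

theory Defs
  imports Main
begin

text \<open>State of a WRN_k object: the array A, with None playing the role of bottom.\<close>
type_synonym 'v wrn_state = "nat \<Rightarrow> 'v option"

definition wrn :: "nat \<Rightarrow> 'v wrn_state \<Rightarrow> nat \<Rightarrow> 'v \<Rightarrow> 'v wrn_state \<times> 'v option" where
  "wrn k A i x = (A(i := Some x), A ((i + 1) mod k))"

definition decide :: "('v option) \<Rightarrow> 'v \<Rightarrow> 'v" where
  "decide t x = (case t of Some y \<Rightarrow> y | None \<Rightarrow> x)"

text \<open>Running the algorithm along a schedule: the schedule lists the processes in the
  order in which they perform their (single) atomic WRN step; processes not listed
  have crashed before taking their step.\<close>
fun run :: "nat \<Rightarrow> (nat \<Rightarrow> 'v) \<Rightarrow> nat list \<Rightarrow> 'v wrn_state \<Rightarrow> (nat \<Rightarrow> 'v option)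
            \<Rightarrow> 'v wrn_state \<times> (nat \<Rightarrow> 'v option)" where
  "run k v [] A D = (A, D)"
| "run k v (i # is) A D =
     (let (A', t) = wrn k A i (v i) in run k v is A' (D(i := Some (decide t (v i)))))"

definition decisions :: "nat \<Rightarrow> (nat \<Rightarrow> 'v) \<Rightarrow> nat list \<Rightarrow> nat \<Rightarrow> 'v option" where
  "decisions k v sched = snd (run k v sched (\<lambda>_. None) (\<lambda>_. None))"

definition valid_schedule :: "nat \<Rightarrow> nat list \<Rightarrow> bool" where
  "valid_schedule k sched \<longleftrightarrow> distinct sched \<and> set sched \<subseteq> {..<k}"

end

theory Submission
  imports Defs
begin

text \<open>The first process P_f to take a step reads \<bottom> and decides its own input v_f, which it has
  just written into A[f]. If every process takes its step, then so does the cyclic predecessor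
  P_p of P_f, with (p + 1) mod k = f; it steps after P_f, reads v_f from A[f] and decides v_f
  as well. Hence either fewer than k processes decide, or two of the k deciding processes decide
  the same value. Neither argument uses that the inputs are pairwise different.\<close>

lemma run_append:
  "run k v (xs @ ys) A D = (case run k v xs A D of (A', D') \<Rightarrow> run k v ys A' D')"
  by (induction xs arbitrary: A D) (auto simp: wrn_def split: prod.splits)

lemma fst_run:
  "fst (run k v xs A D) j = (if j \<in> set xs then Some (v j) else A j)"
  by (induction xs arbitrary: A D) (auto simp: wrn_def)

lemma snd_run_notin:
  "i \<notin> set xs \<Longrightarrow> snd (run k v xs A D) i = D i"
  by (induction xs arbitrary: A D) (auto simp: wrn_def)

lemma dom_snd_run: "dom (snd (run k v xs A D)) = dom D \<union> set xs"
  by (induction xs arbitrary: A D) (auto simp: wrn_def)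

lemma dom_decisions: "dom (decisions k v sched) = set sched"
  by (simp add: decisions_def dom_snd_run)

lemma decisions_step:
  assumes "distinct (xs @ i # ys)"
  shows "decisions k v (xs @ i # ys) i =
           Some (if (i + 1) mod k \<in> set xs then v ((i + 1) mod k) else v i)"
proof -
  obtain A D where xs_run: "run k v xs Map.empty Map.empty = (A, D)"
    by fastforce
  have "A ((i + 1) mod k) = (if (i + 1) mod k \<in> set xs then Some (v ((i + 1) mod k)) else None)"
    using fst_run[of k v xs Map.empty Map.empty] xs_run by simp
  moreover have "i \<notin> set ys"
    using assms by simp
  ultimately show ?thesis
    by (simp add: decisions_def run_append xs_run wrn_def decide_def snd_run_notin)
qed

lemma ran_eq_image_dom: "ran m = (\<lambda>i. the (m i)) ` dom m"
  by (force simp: ran_def dom_def)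

lemma card_ran_le_card_dom: "finite (dom m) \<Longrightarrow> card (ran m) \<le> card (dom m)"
  by (simp add: ran_eq_image_dom card_image_le)

lemma card_ran_less_card_dom:
  assumes "finite (dom m)" and "i \<in> dom m" and "j \<in> dom m" and "i \<noteq> j" and "m i = m j"
  shows "card (ran m) < card (dom m)"
proof -
  let ?g = "\<lambda>i. the (m i)"
  have "?g i \<in> ?g ` (dom m - {i})"
    using assms(3-5) by force
  then have "ran m = ?g ` (dom m - {i})"
    using assms(2) unfolding ran_eq_image_dom by (metis image_insert insert_Diff insert_absorb)
  then have "card (ran m) \<le> card (dom m - {i})"
    using assms(1) by (simp add: card_image_le)
  also have "\<dots> < card (dom m)"
    using assms(1,2) by (rule card_Diff1_less)
  finally show ?thesis .
qed

lemma cyclic_predecessor: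
  fixes k f :: nat
  assumes "2 \<le> k" and "f < k"
  obtains p where "p < k" and "p \<noteq> f" and "(p + 1) mod k = f"
proof
  show "(f + k - 1) mod k < k" and "((f + k - 1) mod k + 1) mod k = f"
    using assms by (simp_all add: mod_Suc_eq)
  show "(f + k - 1) mod k \<noteq> f"
  proof
    assume "(f + k - 1) mod k = f"
    then have "(f + 1) mod k = f"
      using \<open>((f + k - 1) mod k + 1) mod k = f\<close> by simp
    then show False
      using assms by (cases "f + 1 = k") auto
  qed
qed

lemma decisions_collide:
  assumes "2 \<le> k" and "valid_schedule k sched" and "set sched = {..<k}"
  obtains p f where "p \<in> set sched" and "f \<in> set sched" and "p \<noteq> f"
    and "decisions k v sched p = decisions k v sched f"
proof -
  have "0 \<in> set sched"
    using assms(1,3) by simp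
  then obtain f rest where sched: "sched = f # rest"
    by (cases sched) auto
  then have "f < k"
    using assms(3) by auto
  then obtain p where "p < k" and "p \<noteq> f" and succ_p: "(p + 1) mod k = f"
    using cyclic_predecessor[OF assms(1)] by blast
  then have "p \<in> set rest"
    using assms(3) sched by auto
  then obtain xs ys where rest: "rest = xs @ p # ys"
    by (meson split_list)
  have "distinct ([] @ f # rest)" and "distinct ((f # xs) @ p # ys)"
    using assms(2) sched rest by (simp_all add: valid_schedule_def)
  then have "decisions k v sched f = Some (v f)" and "decisions k v sched p = Some (v f)"
    using decisions_step[of "[]" f rest k v] decisions_step[of "f # xs" p ys k v] sched rest succ_p
    by simp_all
  then show thesis
    using that[of p f] \<open>p \<noteq> f\<close> \<open>p \<in> set rest\<close> sched by simp
qed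

theorem corollary8:
  fixes k :: nat and v :: "nat \<Rightarrow> 'v" and sched :: "nat list"
  assumes "k \<ge> 3"
    and "inj_on v {..<k}"
    and "valid_schedule k sched"
  shows "card (ran (decisions k v sched)) \<le> k - 1"
proof -
  let ?D = "decisions k v sched"
  have steps: "set sched \<subseteq> {..<k}"
    using assms(3) by (simp add: valid_schedule_def)
  have "card (ran ?D) < k"
  proof (cases "set sched = {..<k}")
    case True
    then obtain p f where "p \<in> dom ?D" "f \<in> dom ?D" "p \<noteq> f" "?D p = ?D f"
      using decisions_collide[of k sched v] assms(1,3) by (auto simp: dom_decisions)
    then show ?thesis
      using card_ran_less_card_dom[of ?D p f] True by (simp add: dom_decisions)
  next
    case False
    then have "card (set sched) < k"
      using steps psubset_card_mono[of "{..<k}" "set sched"] by auto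
    then show ?thesis
      using card_ran_le_card_dom[of ?D] by (simp add: dom_decisions)
  qed
  then show ?thesis
    by simp
qed

end
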